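(* Let $J$ be an ordinal, anonymous and neutral randomized mechanism for the unit-range normalization with $n$ agents and $n$ items, and let $\epsilon>0$. Then $$ar(J) = \inf_{\mathbf u\in C_\epsilon^n} \frac{\mathbb E[\sum_{i=1}^n u_i(J(\mathbf u)_i)]}{w^*(\mathbf u)}.$$
   Context: Agents $N=\{1,\dots,n\}$, items $M=\{1,\dots,n\}$, outcomes are bijections $\mu$ ($O$ the set of outcomes). Unit-range valuation functions: injective $u:M\to\mathbb R$ with $\max_j u(j)=1$ and $\min_j u(j)=0$; $V$ is the set of these, $V^n$ the set of profiles. A randomized mechanism $J$ maps each profile to a distribution over $O$. $J$ is ordinal if its output distribution is unchanged when one agent's valuation function is replaced by another inducing the same ordering of items. $J$ is anonymous if for every permutation $\pi$ of agents, with $\mathbf u^\pi=(u_{\pi(1)},\dots,u_{\pi(n)})$, $(J(\mathbf u^\pi)_k)_k$ has the same distribution as $(J(\mathbf u)_{\pi(k)})_k$. $J$ is neutral if for every permutation $\sigma$ of items, with $\mathbf u\circ\sigma=(u_1\circ\sigma,\dots,u_n\circ\sigma)$, $(\sigma(J(\mathbf u\circ\sigma)_i))_i$ has the same distribution as $(J(\mathbf u)_i)_i$. $w^*(\mathbf u)=\max_{\mu\in O}\sum_i u_i(\mu_i)$, and $ar(J)=\inf_{\mathbf u\in V^n}\mathbb E[\sum_i u_i(J(\mathbf u)_i)]/w^*(\mathbf u)$. The quasi-combinatorial valuation functions are $C_\epsilon=\{u\in V : u(M)\subseteq[0,\epsilon)\cup(1-\epsilon,1]\}$, and $C_\epsilon^n$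 is the set of profiles all of whose valuation functions lie in $C_\epsilon$. *)

theory Defs
  imports "HOL-Probability.Probability"
begin

text \<open>Agents and items are both indexed by a finite type 'n (so there are n = CARD('n)
 agents and n items). An outcome is a bijection mu :: 'n => 'n (agent i receives item mu i).
 A profile is a function u :: 'n => 'n => real, u i being agent i's valuation function.
 A randomized mechanism is a map from profiles to probability mass functions over
 functions 'n => 'n; it is only constrained on profiles in V^n.\<close>

definition outcomes :: "('n::finite \<Rightarrow> 'n) set" where
  "outcomes = {\<mu>. bij \<mu>}"

definition unit_range :: "('n::finite \<Rightarrow> real) set" where
  "unit_range = {u. inj u \<and> Max (range u) = 1 \<and> Min (range u) = 0}"

definition profiles :: "('n::finite \<Rightarrow> 'n \<Rightarrow> real) set" where
  "profiles = {u. \<forall>i. u i \<in> unit_range}"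

definition quasi_comb :: "real \<Rightarrow> ('n::finite \<Rightarrow> real) set" where
  "quasi_comb \<epsilon> = {u \<in> unit_range. \<forall>j. u j \<in> {0..<\<epsilon>} \<union> {1 - \<epsilon><..1}}"

definition quasi_comb_profiles :: "real \<Rightarrow> ('n::finite \<Rightarrow> 'n \<Rightarrow> real) set" where
  "quasi_comb_profiles \<epsilon> = {u. \<forall>i. u i \<in> quasi_comb \<epsilon>}"

definition welfare :: "('n::finite \<Rightarrow> 'n \<Rightarrow> real) \<Rightarrow> ('n \<Rightarrow> 'n) \<Rightarrow> real" where
  "welfare u \<mu> = (\<Sum>i\<in>UNIV. u i (\<mu> i))"

definition opt_welfare :: "('n::finite \<Rightarrow> 'n \<Rightarrow> real) \<Rightarrow> real" where
  "opt_welfare u = Max (welfare u ` outcomes)"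

type_synonym 'n mechanism = "('n \<Rightarrow> 'n \<Rightarrow> real) \<Rightarrow> ('n \<Rightarrow> 'n) pmf"

definition is_mechanism :: "'n::finite mechanism \<Rightarrow> bool" where
  "is_mechanism J \<longleftrightarrow> (\<forall>u\<in>profiles. set_pmf (J u) \<subseteq> outcomes)"

definition same_order :: "('n \<Rightarrow> real) \<Rightarrow> ('n \<Rightarrow> real) \<Rightarrow> bool" where
  "same_order v w \<longleftrightarrow> (\<forall>a b. v a < v b \<longleftrightarrow> w a < w b)"

definition ordinal :: "'n::finite mechanism \<Rightarrow> bool" where
  "ordinal J \<longleftrightarrow> (\<forall>u\<in>profiles. \<forall>i. \<forall>v\<in>unit_range.
      same_order (u i) v \<longrightarrow> J (u(i := v)) = J u)"

definition anonymous :: "'n::finite mechanism \<Rightarrow> bool" where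
  "anonymous J \<longleftrightarrow> (\<forall>u\<in>profiles. \<forall>\<pi>. bij \<pi> \<longrightarrow>
      J (\<lambda>k. u (\<pi> k)) = map_pmf (\<lambda>\<mu>. \<lambda>k. \<mu> (\<pi> k)) (J u))"

definition neutral :: "'n::finite mechanism \<Rightarrow> bool" where
  "neutral J \<longleftrightarrow> (\<forall>u\<in>profiles. \<forall>\<sigma>. bij \<sigma> \<longrightarrow>
      map_pmf (\<lambda>\<mu>. \<lambda>i. \<sigma> (\<mu> i)) (J (\<lambda>i. u i \<circ> \<sigma>)) = J u)"

definition exp_welfare :: "'n::finite mechanism \<Rightarrow> ('n \<Rightarrow> 'n \<Rightarrow> real) \<Rightarrow> real" where
  "exp_welfare J u = measure_pmf.expectation (J u) (welfare u)"

definition approx_ratio :: "'n::finite mechanism \<Rightarrow> real" where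
  "approx_ratio J = (INF u\<in>profiles. exp_welfare J u / opt_welfare u)"

end

theory Submission
  imports Defs "HOL-Combinatorics.Transposition"
begin

(* Fix a profile u and an agent i with
   valuation a = u i.  For 0 < eta <= 1 with eta < epsilon put T x = (1 - eta) x + eta a.
   Since J is ordinal, J u is also the outcome distribution at u(i := T x) whenever T x
   ranks the items like a; so F x = E_{J u}[welfare (u(i := T x))] is affine in x, while
   G x = opt_welfare (u(i := T x)) is convex in x (a maximum of affine functions).
   A ratio of an affine by a positive convex function at a convex combination is at
   least the smaller of the two ratios at the endpoints.  Peeling off threshold
   indicators, every [0,1]-valued x that is monotone along the order of a is a convex
   combination of 0/1-valued such functions, so some 0/1-valued z has F z / G z <= F a / G a.
   Then w = T z is quasi-combinatorial and ranks items like a, so replacing u i by w does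
   not increase the welfare ratio.  Doing this for every agent yields a profile in
   C_epsilon^n with no larger ratio, hence the two infima coincide. *)

abbreviation welfare_ratio :: "'n::finite mechanism \<Rightarrow> ('n \<Rightarrow> 'n \<Rightarrow> real) \<Rightarrow> real" where
  "welfare_ratio J u \<equiv> exp_welfare J u / opt_welfare u"

section \<open>Unit-range valuations\<close>

lemma unit_range_bounds:
  assumes "v \<in> unit_range"
  shows "0 \<le> v j" "v j \<le> 1"
proof -
  have "v j \<le> Max (range v)" "Min (range v) \<le> v j" by simp_all
  moreover have "Max (range v) = 1" "Min (range v) = 0" using assms by (simp_all add: unit_range_def)
  ultimately show "0 \<le> v j" "v j \<le> 1" by simp_all
qed

lemma unit_range_attains:
  assumes "v \<in> unit_range"
  obtains jt jb where "v jt = 1" "v jb = 0"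
proof -
  have "Max (range v) \<in> range v" "Min (range v) \<in> range v" by simp_all
  moreover have "Max (range v) = 1" "Min (range v) = 0" using assms by (simp_all add: unit_range_def)
  ultimately show thesis using that by (metis rangeE)
qed

lemma unit_rangeI:
  assumes "inj w" "\<And>j. 0 \<le> w j \<and> w j \<le> 1" "w jt = 1" "w jb = 0"
  shows "w \<in> unit_range"
proof -
  have "Max (range w) = 1" by (rule Max_eqI) (use assms in \<open>auto intro: range_eqI[of _ _ jt]\<close>)
  moreover have "Min (range w) = 0" by (rule Min_eqI) (use assms in \<open>auto intro: range_eqI[of _ _ jb]\<close>)
  ultimately show ?thesis using assms(1) by (simp add: unit_range_def)
qed

lemma same_orderI:
  fixes a w :: "'n \<Rightarrow> real"
  assumes "inj a" and incr: "\<And>b c. a b < a c \<Longrightarrow> w b < w c"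
  shows "same_order a w"
  unfolding same_order_def
proof (intro allI iffI)
  fix b c assume "w b < w c"
  moreover have "a b \<noteq> a c" using \<open>w b < w c\<close> \<open>inj a\<close> by (auto dest: injD)
  ultimately show "a b < a c" using incr[of c b] by fastforce
qed (rule incr)

lemma same_order_inj:
  fixes a w :: "'n \<Rightarrow> real"
  assumes "inj a" "same_order a w"
  shows "inj w"
proof (rule injI)
  fix b c assume "w b = w c"
  then have "\<not> a b < a c" "\<not> a c < a b" using assms(2) by (auto simp: same_order_def)
  then have "a b = a c" by linarith
  then show "b = c" by (rule injD[OF assms(1)])
qed

section \<open>Welfare as a function of one agent's valuation\<close>

lemma welfare_upd: "welfare (u(i := x)) \<mu> = (\<Sum>k\<in>UNIV - {i}. u k (\<mu> k)) + x (\<mu> i)"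
proof -
  have "welfare (u(i := x)) \<mu> = x (\<mu> i) + (\<Sum>k\<in>UNIV - {i}. (u(i := x)) k (\<mu> k))"
    unfolding welfare_def by (subst sum.remove[of _ i]) auto
  also have "(\<Sum>k\<in>UNIV - {i}. (u(i := x)) k (\<mu> k)) = (\<Sum>k\<in>UNIV - {i}. u k (\<mu> k))"
    by (rule sum.cong) auto
  finally show ?thesis by (simp only: fun_upd_same add.commute)
qed

lemma welfare_affine:
  assumes "\<And>j. X j = c * Z j + (1 - c) * Y j"
  shows "welfare (u(i := X)) \<mu> = c * welfare (u(i := Z)) \<mu> + (1 - c) * welfare (u(i := Y)) \<mu>"
  unfolding welfare_upd assms by (simp add: algebra_simps)

lemma expected_welfare_affine:
  fixes p :: "('n::finite \<Rightarrow> 'n) pmf"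
  assumes "\<And>j. X j = c * Z j + (1 - c) * Y j"
  shows "measure_pmf.expectation p (welfare (u(i := X)))
    = c * measure_pmf.expectation p (welfare (u(i := Z)))
      + (1 - c) * measure_pmf.expectation p (welfare (u(i := Y)))"
proof -
  have int: "integrable (measure_pmf p) f" for f :: "('n \<Rightarrow> 'n) \<Rightarrow> real"
    by (rule integrable_measure_pmf_finite) simp
  show ?thesis
    unfolding welfare_affine[OF assms, abs_def] by (simp add: int)
qed

lemma welfare_le_opt: "\<mu> \<in> outcomes \<Longrightarrow> welfare u \<mu> \<le> opt_welfare u"
  unfolding opt_welfare_def by simp

lemma opt_welfare_attained: obtains \<mu> where "\<mu> \<in> outcomes" "opt_welfare u = welfare u \<mu>"
proof -
  have "id \<in> outcomes" by (simp add: outcomes_def)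
  then have "opt_welfare u \<in> welfare u ` outcomes"
    unfolding opt_welfare_def by (intro Max_in) auto
  then show thesis using that by auto
qed

lemma opt_welfare_convex:
  assumes "\<And>j. X j = c * Z j + (1 - c) * Y j" "0 \<le> c" "c \<le> 1"
  shows "opt_welfare (u(i := X)) \<le> c * opt_welfare (u(i := Z)) + (1 - c) * opt_welfare (u(i := Y))"
proof -
  obtain \<mu> where \<mu>: "\<mu> \<in> outcomes" "opt_welfare (u(i := X)) = welfare (u(i := X)) \<mu>"
    using opt_welfare_attained by blast
  have "welfare (u(i := X)) \<mu> = c * welfare (u(i := Z)) \<mu> + (1 - c) * welfare (u(i := Y)) \<mu>"
    by (rule welfare_affine) (rule assms)
  also have "\<dots> \<le> c * opt_welfare (u(i := Z)) + (1 - c) * opt_welfare (u(i := Y))"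
    using assms \<mu> by (intro add_mono mult_left_mono welfare_le_opt) auto
  finally show ?thesis using \<mu> by simp
qed

lemma welfare_nonneg: "(\<And>k j. 0 \<le> v k j) \<Longrightarrow> 0 \<le> welfare v \<mu>"
  unfolding welfare_def by (intro sum_nonneg) auto

text \<open>With nonnegative valuations, one positive value already makes the optimum positive:
  give that item to that agent via a transposition.\<close>

lemma opt_welfare_pos:
  assumes "\<And>k j. 0 \<le> v k j" "v i j > 0"
  shows "opt_welfare v > 0"
proof -
  let ?\<mu> = "Transposition.transpose i j"
  have "v i (?\<mu> i) \<le> welfare v ?\<mu>"
    unfolding welfare_def using assms(1) by (intro member_le_sum) auto
  also have "\<dots> \<le> opt_welfare v" by (rule welfare_le_opt) (simp add: outcomes_def)
  finally show ?thesis using assms(2) by simp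
qed

lemma profile_nonneg: "u \<in> profiles \<Longrightarrow> 0 \<le> u k j"
  unfolding profiles_def using unit_range_bounds by blast

lemma welfare_ratio_nonneg:
  assumes u: "u \<in> profiles"
  shows "0 \<le> welfare_ratio J u"
proof -
  have "0 \<le> exp_welfare J u"
    unfolding exp_welfare_def by (intro integral_nonneg_AE AE_I2 welfare_nonneg profile_nonneg[OF u])
  moreover have "0 \<le> opt_welfare u"
    using welfare_nonneg[of u id] welfare_le_opt[of id u] profile_nonneg[OF u]
    by (simp add: outcomes_def)
  ultimately show ?thesis by simp
qed

section \<open>Ratios of affine and convex functions\<close>

lemma ratio_ge_min_endpoints:
  fixes Fx Fy Fz Gx Gy Gz c :: real
  assumes "Gx > 0" "Gy > 0" "Gz > 0" "Fy \<ge> 0" "Fz \<ge> 0" "0 \<le> c" "c \<le> 1"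
    and F: "Fx = c * Fz + (1 - c) * Fy" and G: "Gx \<le> c * Gz + (1 - c) * Gy"
  shows "min (Fz / Gz) (Fy / Gy) \<le> Fx / Gx"
proof -
  define t where "t = min (Fz / Gz) (Fy / Gy)"
  have "t \<ge> 0" using assms by (simp add: t_def)
  have "t \<le> Fz / Gz" "t \<le> Fy / Gy" by (simp_all add: t_def)
  then have "t * Gz \<le> Fz" "t * Gy \<le> Fy" using assms by (simp_all add: pos_le_divide_eq)
  have "t * Gx \<le> t * (c * Gz + (1 - c) * Gy)" using G \<open>t \<ge> 0\<close> by (rule mult_left_mono)
  also have "\<dots> = c * (t * Gz) + (1 - c) * (t * Gy)" by (simp add: algebra_simps)
  also have "\<dots> \<le> Fx"
    unfolding F using assms \<open>t * Gz \<le> Fz\<close> \<open>t * Gy \<le> Fy\<close> by (intro add_mono mult_left_mono) auto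
  finally show ?thesis using assms(1) by (simp add: t_def pos_le_divide_eq)
qed

section \<open>Threshold decomposition\<close>

definition unit_monotone :: "('n \<Rightarrow> real) \<Rightarrow> ('n \<Rightarrow> real) \<Rightarrow> bool" where
  "unit_monotone a x \<longleftrightarrow> (\<forall>j. 0 \<le> x j \<and> x j \<le> 1) \<and> (\<forall>j j'. a j < a j' \<longrightarrow> x j \<le> x j')
     \<and> (\<exists>j. x j = 0) \<and> (\<exists>j. x j = 1)"

definition fractional :: "('n \<Rightarrow> real) \<Rightarrow> 'n set" where
  "fractional x = {j. 0 < x j \<and> x j < 1}"

lemma unit_monotone_self: "a \<in> unit_range \<Longrightarrow> unit_monotone a a"
  unfolding unit_monotone_def using unit_range_bounds unit_range_attains
  by (metis less_imp_le)

lemma zero_one_valued: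
  assumes "unit_monotone a x" "fractional x = {}"
  shows "x j = 0 \<or> x j = 1"
proof -
  have "0 \<le> x j" "x j \<le> 1" using assms(1) by (auto simp: unit_monotone_def)
  moreover have "\<not> (0 < x j \<and> x j < 1)" using assms(2) by (auto simp: fractional_def)
  ultimately show ?thesis by linarith
qed

lemma unit_monotone_extremes:
  assumes x: "unit_monotone a x" and "inj a"
  shows "(\<And>j. a j \<le> a jt) \<Longrightarrow> x jt = 1" "(\<And>j. a jb \<le> a j) \<Longrightarrow> x jb = 0"
proof -
  have x01: "0 \<le> x j" "x j \<le> 1" for j using x by (auto simp: unit_monotone_def)
  have mono: "x j \<le> x j'" if "a j \<le> a j'" for j j'
  proof (cases "j = j'")
    case False
    then have "a j < a j'" using that \<open>inj a\<close> by (metis injD order_less_le)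
    then show ?thesis using x by (simp add: unit_monotone_def)
  qed simp
  obtain j1 j0 where "x j1 = 1" "x j0 = 0" using x by (auto simp: unit_monotone_def)
  show "x jt = 1" if "\<And>j. a j \<le> a jt" using mono[OF that, of j1] x01[of jt] \<open>x j1 = 1\<close> by simp
  show "x jb = 0" if "\<And>j. a jb \<le> a j" using mono[OF that, of j0] x01[of jb] \<open>x j0 = 0\<close> by simp
qed

text \<open>Peeling off the lowest threshold: with c the least fractional value, x is a convex
  combination of the indicator of the upper set {x >= c} and a rescaled function with
  strictly fewer fractional values.\<close>

lemma peel_threshold:
  fixes x :: "'n::finite \<Rightarrow> real"
  assumes x: "unit_monotone a x" and frac: "fractional x \<noteq> {}"
  obtains c z y where "0 < c" "c < 1" "\<And>j. x j = c * z j + (1 - c) * y j"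
    "unit_monotone a z" "fractional z = {}" "unit_monotone a y"
    "card (fractional y) < card (fractional x)"
proof -
  have x01: "0 \<le> x j" "x j \<le> 1" for j using x by (auto simp: unit_monotone_def)
  define c where "c = Min (x ` fractional x)"
  have "c \<in> x ` fractional x" unfolding c_def using frac by (intro Min_in) auto
  then obtain j0 where j0: "j0 \<in> fractional x" "x j0 = c" by blast
  then have c01: "0 < c" "c < 1" by (auto simp: fractional_def)
  have below_c: "x j = 0" if "x j < c" for j
  proof (rule ccontr)
    assume "x j \<noteq> 0"
    then have "j \<in> fractional x" using x01[of j] that c01 by (auto simp: fractional_def)
    then have "c \<le> x j" unfolding c_def by (intro Min_le) auto
    then show False using that by simp
  qed
  define z where "z = (\<lambda>j. if c \<le> x j then 1 else (0::real))"
  define y where "y = (\<lambda>j. if c \<le> x j then (x j - c) / (1 - c) else 0)"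
  have comb: "x j = c * z j + (1 - c) * y j" for j
    using c01 below_c[of j] by (auto simp: z_def y_def)
  have mono_x: "x j \<le> x j'" if "a j < a j'" for j j' using x that by (auto simp: unit_monotone_def)
  obtain jb jt where jb: "x jb = 0" and jt: "x jt = 1" using x by (auto simp: unit_monotone_def)
  have "z jb = 0" "z jt = 1" using jb jt c01 by (simp_all add: z_def)
  moreover have "z j \<le> z j'" if "a j < a j'" for j j' using mono_x[OF that] by (auto simp: z_def)
  moreover have "0 \<le> z j \<and> z j \<le> 1" for j by (simp add: z_def)
  ultimately have z: "unit_monotone a z" unfolding unit_monotone_def by blast
  have "y jb = 0" "y jt = 1" using jb jt c01 by (simp_all add: y_def)
  moreover have "y j \<le> y j'" if "a j < a j'" for j j'
  proof (cases "c \<le> x j")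
    case True
    then show ?thesis using mono_x[OF that] c01 by (simp add: y_def divide_right_mono)
  next
    case False
    then show ?thesis using c01 x01[of j'] by (auto simp: y_def)
  qed
  moreover have "0 \<le> y j \<and> y j \<le> 1" for j
    using c01 x01[of j] by (auto simp: y_def divide_simps)
  ultimately have y: "unit_monotone a y" unfolding unit_monotone_def by blast
  have "fractional y \<subseteq> fractional x"
    using c01 by (auto simp: fractional_def y_def divide_simps split: if_splits)
  moreover have "j0 \<notin> fractional y" using j0 by (simp add: fractional_def y_def)
  ultimately have "fractional y \<subset> fractional x" using j0 by blast
  then have "card (fractional y) < card (fractional x)" by (intro psubset_card_mono) simp
  moreover have "fractional z = {}" by (auto simp: fractional_def z_def)
  ultimately show thesis using that c01 comb z y by blast
qed

lemma threshold_ratio_bound: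
  fixes F G :: "('n::finite \<Rightarrow> real) \<Rightarrow> real"
  assumes affine: "\<And>x y z c. (\<And>j. x j = c * z j + (1 - c) * y j) \<Longrightarrow> F x = c * F z + (1 - c) * F y"
    and convex: "\<And>x y z c. (\<And>j. x j = c * z j + (1 - c) * y j) \<Longrightarrow> 0 \<le> c \<Longrightarrow> c \<le> 1
        \<Longrightarrow> G x \<le> c * G z + (1 - c) * G y"
    and pos: "\<And>x. (\<And>j. 0 \<le> x j \<and> x j \<le> 1) \<Longrightarrow> G x > 0 \<and> F x \<ge> 0"
    and x: "unit_monotone a x"
  shows "\<exists>z. unit_monotone a z \<and> fractional z = {} \<and> F z / G z \<le> F x / G x"
  using x
proof (induction "card (fractional x)" arbitrary: x rule: less_induct)
  case less
  show ?case
  proof (cases "fractional x = {}")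
    case True
    then show ?thesis using less.prems by blast
  next
    case False
    then obtain c z y where c: "0 < c" "c < 1" and comb: "\<And>j. x j = c * z j + (1 - c) * y j"
      and z: "unit_monotone a z" "fractional z = {}" and y: "unit_monotone a y"
      and fewer: "card (fractional y) < card (fractional x)"
      using peel_threshold[OF less.prems] by blast
    obtain z' where z': "unit_monotone a z'" "fractional z' = {}" "F z' / G z' \<le> F y / G y"
      using less.hyps[OF fewer y] by blast
    have bounds: "\<And>j. 0 \<le> v j \<and> v j \<le> 1" if "unit_monotone a v" for v
      using that by (simp add: unit_monotone_def)
    have min: "min (F z / G z) (F y / G y) \<le> F x / G x"
    proof (rule ratio_ge_min_endpoints)
      show "F x = c * F z + (1 - c) * F y" by (rule affine) (rule comb)
      show "G x \<le> c * G z + (1 - c) * G y" by (rule convex) (use comb c in auto)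
    qed (use c pos bounds less.prems z(1) y in auto)
    show ?thesis
    proof (cases "F z / G z \<le> F y / G y")
      case True
      then have "F z / G z \<le> F x / G x" using min by (simp add: min_def)
      then show ?thesis using z by blast
    next
      case False
      then have "F z' / G z' \<le> F x / G x" using min z'(3) by (simp add: min_def)
      then show ?thesis using z' by blast
    qed
  qed
qed

section \<open>Replacing one valuation by a quasi-combinatorial one\<close>

lemma perturbed_threshold_quasi_comb:
  assumes a: "a \<in> unit_range" and z: "unit_monotone a z" "fractional z = {}"
    and \<eta>: "0 < \<eta>" "\<eta> < \<epsilon>" "\<eta> \<le> 1"
  defines "w \<equiv> \<lambda>j. (1 - \<eta>) * z j + \<eta> * a j"
  shows "w \<in> quasi_comb \<epsilon>" "same_order a w"
proof -
  have a01: "0 \<le> a j" "a j \<le> 1" for j using unit_range_bounds[OF a] by auto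
  have z01: "z j = 0 \<or> z j = 1" for j using zero_one_valued[OF z] .
  have "inj a" using a by (simp add: unit_range_def)
  have incr: "w b < w c" if "a b < a c" for b c
  proof -
    have "z b \<le> z c" using z(1) that by (auto simp: unit_monotone_def)
    then have "(1 - \<eta>) * z b \<le> (1 - \<eta>) * z c" using \<eta> by (intro mult_left_mono) auto
    moreover have "\<eta> * a b < \<eta> * a c" using \<eta> that by simp
    ultimately show ?thesis by (simp add: w_def)
  qed
  show so: "same_order a w" using same_orderI[OF \<open>inj a\<close> incr] .
  obtain jt jb where jt: "a jt = 1" and jb: "a jb = 0" using unit_range_attains[OF a] .
  have "z jt = 1" "z jb = 0"
    using unit_monotone_extremes[OF z(1) \<open>inj a\<close>] jt jb a01 by simp_all
  then have "w jt = 1" "w jb = 0" using jt jb by (simp_all add: w_def)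
  moreover have w_range: "0 \<le> w j \<and> w j \<le> 1" "w j \<in> {0..<\<epsilon>} \<union> {1 - \<epsilon><..1}" for j
  proof -
    obtain t where t: "w j = (1 - \<eta>) * z j + t" "0 \<le> t" "t \<le> \<eta>"
      using a01[of j] \<eta> mult_left_le[of "a j" \<eta>] by (simp add: w_def)
    then show "0 \<le> w j \<and> w j \<le> 1" "w j \<in> {0..<\<epsilon>} \<union> {1 - \<epsilon><..1}"
      using z01[of j] \<eta> by auto
  qed
  ultimately have "w \<in> unit_range"
    using unit_rangeI[OF same_order_inj[OF \<open>inj a\<close> so]] by blast
  then show "w \<in> quasi_comb \<epsilon>" using w_range(2) by (simp add: quasi_comb_def)
qed

lemma mixed_threshold_ratio_bound:
  fixes p :: "('n::finite \<Rightarrow> 'n) pmf" and i :: 'n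
  assumes u: "u \<in> profiles" and \<eta>: "0 < \<eta>" "\<eta> \<le> 1"
  defines "T \<equiv> \<lambda>x j. (1 - \<eta>) * x j + \<eta> * u i j"
  obtains z where "unit_monotone (u i) z" "fractional z = {}"
    "measure_pmf.expectation p (welfare (u(i := T z))) / opt_welfare (u(i := T z))
      \<le> measure_pmf.expectation p (welfare u) / opt_welfare u"
proof -
  define F where "F = (\<lambda>x. measure_pmf.expectation p (welfare (u(i := T x))))"
  define G where "G = (\<lambda>x. opt_welfare (u(i := T x)))"
  have a: "u i \<in> unit_range" using u by (simp add: profiles_def)
  obtain jt where jt: "u i jt = 1" using unit_range_attains[OF a] by metis
  have T_comb: "T x j = c * T z j + (1 - c) * T y j"
    if "\<And>j. x j = c * z j + (1 - c) * y j" for x y z c j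
    unfolding T_def that by (simp add: algebra_simps)
  have T_nonneg: "0 \<le> (u(i := T x)) k j" if "\<And>j. 0 \<le> x j \<and> x j \<le> 1" for x k j
    using that[of j] profile_nonneg[OF u] \<eta> by (auto simp: T_def)
  have "\<exists>z. unit_monotone (u i) z \<and> fractional z = {} \<and> F z / G z \<le> F (u i) / G (u i)"
  proof (rule threshold_ratio_bound)
    show "F x = c * F z + (1 - c) * F y" if "\<And>j. x j = c * z j + (1 - c) * y j" for x y z c
      unfolding F_def by (intro expected_welfare_affine T_comb that)
    show "G x \<le> c * G z + (1 - c) * G y"
      if "\<And>j. x j = c * z j + (1 - c) * y j" "0 \<le> c" "c \<le> 1" for x y z c
      unfolding G_def by (intro opt_welfare_convex T_comb that)
    show "G x > 0 \<and> F x \<ge> 0" if x01: "\<And>j. 0 \<le> x j \<and> x j \<le> 1" for x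
    proof
      have "0 \<le> (1 - \<eta>) * x jt" using x01[of jt] \<eta> by simp
      then have "(u(i := T x)) i jt > 0" using jt \<eta> by (simp add: T_def)
      then show "G x > 0" unfolding G_def by (intro opt_welfare_pos T_nonneg x01)
      show "F x \<ge> 0"
        unfolding F_def by (intro integral_nonneg_AE AE_I2 welfare_nonneg T_nonneg x01)
    qed
  qed (rule unit_monotone_self[OF a])
  moreover have "T (u i) = u i" by (simp add: T_def algebra_simps)
  ultimately show thesis using that by (auto simp: F_def G_def)
qed

text \<open>The replacement ranks the
  items as before, so J returns the same distribution and the previous lemma applies.\<close>

lemma quasi_comb_replacement:
  fixes J :: "'n::finite mechanism"
  assumes ord: "ordinal J" and u: "u \<in> profiles" and \<epsilon>: "\<epsilon> > 0"
  obtains w where "w \<in> quasi_comb \<epsilon>" "u(i := w) \<in> profiles"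
    "welfare_ratio J (u(i := w)) \<le> welfare_ratio J u"
proof -
  define \<eta> :: real where "\<eta> = min (\<epsilon> / 2) (1 / 2)"
  have \<eta>: "0 < \<eta>" "\<eta> < \<epsilon>" "\<eta> \<le> 1" using \<epsilon> by (auto simp: \<eta>_def)
  define T where "T = (\<lambda>x j. (1 - \<eta>) * x j + \<eta> * u i j)"
  obtain z where z: "unit_monotone (u i) z" "fractional z = {}"
    and ratio: "measure_pmf.expectation (J u) (welfare (u(i := T z))) / opt_welfare (u(i := T z))
      \<le> welfare_ratio J u"
    using mixed_threshold_ratio_bound[OF u \<eta>(1,3), where p = "J u" and i = i] unfolding exp_welfare_def T_def
    by blast
  have a: "u i \<in> unit_range" using u by (simp add: profiles_def)
  have w: "T z \<in> quasi_comb \<epsilon>" "same_order (u i) (T z)"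
    using perturbed_threshold_quasi_comb[OF a z \<eta>] by (simp_all add: T_def)
  then have w_unit: "T z \<in> unit_range" by (simp add: quasi_comb_def)
  have "J (u(i := T z)) = J u" using ord u w_unit w(2) by (simp add: ordinal_def)
  then have "welfare_ratio J (u(i := T z)) \<le> welfare_ratio J u"
    using ratio by (simp add: exp_welfare_def)
  moreover have "u(i := T z) \<in> profiles" using u w_unit by (simp add: profiles_def)
  ultimately show thesis using that w(1) by blast
qed

lemma quasi_comb_replacement_set:
  fixes J :: "'n::finite mechanism"
  assumes ord: "ordinal J" and u: "u \<in> profiles" and \<epsilon>: "\<epsilon> > 0" and "finite S"
  shows "\<exists>v\<in>profiles. (\<forall>k\<in>S. v k \<in> quasi_comb \<epsilon>) \<and> welfare_ratio J v \<le> welfare_ratio J u"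
  using \<open>finite S\<close>
proof (induction S rule: finite_induct)
  case empty
  then show ?case using u by auto
next
  case (insert i S)
  then obtain v where v: "v \<in> profiles" "\<forall>k\<in>S. v k \<in> quasi_comb \<epsilon>"
    "welfare_ratio J v \<le> welfare_ratio J u" by blast
  obtain w where w: "w \<in> quasi_comb \<epsilon>" "v(i := w) \<in> profiles"
    "welfare_ratio J (v(i := w)) \<le> welfare_ratio J v"
    using quasi_comb_replacement[OF ord v(1) \<epsilon>] by metis
  have "welfare_ratio J (v(i := w)) \<le> welfare_ratio J u" using w(3) v(3) by (rule order_trans)
  moreover have "\<forall>k\<in>insert i S. (v(i := w)) k \<in> quasi_comb \<epsilon>" using v(2) w(1) by simp
  ultimately show ?case using w(2) by blast
qed

lemma INF_dominating_subset:
  fixes f :: "'a \<Rightarrow> 'b::conditionally_complete_lattice"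
  assumes "Q \<subseteq> P" "bdd_below (f ` P)" and dom: "\<And>p. p \<in> P \<Longrightarrow> \<exists>q\<in>Q. f q \<le> f p"
  shows "(INF p\<in>P. f p) = (INF q\<in>Q. f q)"
proof (cases "P = {}")
  case True
  then show ?thesis using assms(1) by simp
next
  case False
  then have "Q \<noteq> {}" using dom by blast
  have bddQ: "bdd_below (f ` Q)" using assms(1,2) by (meson bdd_below_mono image_mono)
  show ?thesis
  proof (rule order_antisym)
    show "(INF p\<in>P. f p) \<le> (INF q\<in>Q. f q)"
      using \<open>Q \<noteq> {}\<close> assms(1,2) by (auto intro!: cINF_greatest cINF_lower)
    show "(INF q\<in>Q. f q) \<le> (INF p\<in>P. f p)"
    proof (rule cINF_greatest[OF False])
      fix p assume "p \<in> P"
      then obtain q where "q \<in> Q" "f q \<le> f p" using dom by blast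
      then show "(INF q\<in>Q. f q) \<le> f p" using cINF_lower[OF bddQ] order_trans by blast
    qed
  qed
qed

theorem lemma3:
  fixes J :: "'n::finite mechanism" and \<epsilon> :: real
  assumes "is_mechanism J" and "ordinal J" and "anonymous J" and "neutral J"
    and "\<epsilon> > 0"
  shows "approx_ratio J = (INF u\<in>quasi_comb_profiles \<epsilon>. exp_welfare J u / opt_welfare u)"
  unfolding approx_ratio_def
proof (rule INF_dominating_subset)
  show "quasi_comb_profiles \<epsilon> \<subseteq> profiles"
    by (auto simp: quasi_comb_profiles_def profiles_def quasi_comb_def)
  show "bdd_below (welfare_ratio J ` profiles)"
    by (rule bdd_belowI[of _ 0]) (auto intro: welfare_ratio_nonneg)
  show "\<exists>v\<in>quasi_comb_profiles \<epsilon>. welfare_ratio J v \<le> welfare_ratio J u" if "u \<in> profiles" for u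
    using quasi_comb_replacement_set[OF assms(2) that assms(5), of UNIV]
    by (auto simp: quasi_comb_profiles_def)
qed

end
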